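(* Let $N \in \mathbb{N}$, let $\lambda > 0$, and let $f = (f_j)_{j=1}^N,\ g = (g_j)_{j=1}^N \in [-\pi,\pi)^N$. Define $v = (v_j)_{j=1}^N \in \mathbb{R}^N$ by \[ v_j := \begin{cases} 0 & \text{if } |g_j - f_j| \le \pi,\\ \operatorname{sgn}(g_j - f_j) & \text{if } |g_j - f_j| > \pi. \end{cases} \] Then \[ \operatorname*{argmin}_{x \in [-\pi,\pi)^N} \sum_{j=1}^N \Big( d(g_j,x_j)^2 + \lambda\, d(f_j,x_j)^2 \Big) = \left( \frac{g + \lambda f}{1+\lambda} + \frac{\lambda}{1+\lambda}\, 2\pi\, v \right)_{2\pi}, \] i.e. the minimum of $x \mapsto \sum_{j=1}^N \big( d(g_j,x_j)^2 + \lambda d(f_j,x_j)^2 \big)$ over $x \in [-\pi,\pi)^N$ is attained at the displayed point.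
   Context: For $t \in \mathbb{R}$, $(t)_{2\pi}$ denotes the unique point of $[-\pi,\pi)$ with $t - (t)_{2\pi} \in 2\pi\mathbb{Z}$; for a vector it is applied componentwise. Points of the unit circle $\mathbb{S}^1$ are represented by angles in $[-\pi,\pi)$, and for $a,b \in [-\pi,\pi)$ the geodesic (arc-length) distance on the circle is $d(a,b) := \min_{k \in \mathbb{Z}} |b - a + 2\pi k| = |(b-a)_{2\pi}|$. *)

theory Defs
  imports Complex_Main
begin

text \<open>(t)_{2pi}: the unique point of [-pi,pi) congruent to t modulo 2 pi.\<close>
definition wrap2pi :: "real \<Rightarrow> real" where
  "wrap2pi t = t - 2 * pi * of_int \<lfloor>(t + pi) / (2 * pi)\<rfloor>"

definition circ_dist :: "real \<Rightarrow> real \<Rightarrow> real" where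
  "circ_dist a b = \<bar>wrap2pi (b - a)\<bar>"

end

theory Submission
  imports Defs
begin

text \<open>The problem decouples into one circle problem per coordinate. For fixed angles f, g
  choose the lift f' = f + 2 pi v with |g - f'| \<le> pi; this is what the offset v of the
  theorem achieves. Lifting x as well, each coordinate energy is a quadratic
  (y - g)^2 + lam (y - f'')^2 for some lift f'' of f, whose minimum lam/(1+lam) (g - f'')^2
  is smallest for f'' = f'. That bound is attained at the weighted mean of g and f',
  and wrapping the mean back into [-pi,pi) does not increase either circle distance.\<close>

lemma wrap2pi_shift: "\<exists>k::int. wrap2pi t = t + 2 * pi * k"
  unfolding wrap2pi_def by (rule exI[of _ "- \<lfloor>(t + pi) / (2 * pi)\<rfloor>"]) simp

lemma wrap2pi_in_range: "wrap2pi t \<in> {-pi..<pi}"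
proof -
  define q where "q = (t + pi) / (2 * pi)"
  have t: "t = 2 * pi * q - pi"
    unfolding q_def by (simp add: field_simps)
  have "wrap2pi t = 2 * pi * (q - \<lfloor>q\<rfloor>) - pi"
    unfolding wrap2pi_def q_def[symmetric] by (subst (1) t) (simp add: algebra_simps)
  moreover have "0 \<le> q - \<lfloor>q\<rfloor>" "q - \<lfloor>q\<rfloor> < 1"
    by (simp_all add: floor_le_iff) linarith
  ultimately show ?thesis
    by (auto simp: mult_nonneg_nonneg)
qed

lemma abs_le_abs_add_2pi_multiple:
  assumes "\<bar>d\<bar> \<le> pi"
  shows "\<bar>d\<bar> \<le> \<bar>d + 2 * pi * of_int n\<bar>"
proof (cases "n = 0")
  case False
  then have "\<bar>real_of_int n\<bar> \<ge> 1" by linarith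
  then have "\<bar>2 * pi * of_int n\<bar> \<ge> 2 * pi"
    by (simp add: abs_mult)
  then show ?thesis using assms by linarith
qed simp

lemma abs_wrap2pi_le: "\<bar>wrap2pi s\<bar> \<le> \<bar>s + 2 * pi * of_int k\<bar>"
proof -
  obtain k0 :: int where k0: "wrap2pi s = s + 2 * pi * k0"
    using wrap2pi_shift by blast
  have "\<bar>wrap2pi s\<bar> \<le> pi"
    using wrap2pi_in_range[of s] by auto
  then have "\<bar>wrap2pi s\<bar> \<le> \<bar>wrap2pi s + 2 * pi * of_int (k - k0)\<bar>"
    by (rule abs_le_abs_add_2pi_multiple)
  also have "wrap2pi s + 2 * pi * of_int (k - k0) = s + 2 * pi * of_int k"
    using k0 by (simp add: algebra_simps)
  finally show ?thesis .
qed

lemma circ_dist_le: "circ_dist a b \<le> \<bar>b - a + 2 * pi * of_int k\<bar>"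
  unfolding circ_dist_def by (rule abs_wrap2pi_le)

lemma circ_dist_nonneg: "0 \<le> circ_dist a b"
  unfolding circ_dist_def by simp

lemma circ_dist_attained: "\<exists>k::int. circ_dist a b = \<bar>b - a + 2 * pi * k\<bar>"
  using wrap2pi_shift[of "b - a"] unfolding circ_dist_def by auto

lemma weighted_sq_sum_ge:
  fixes lam y a b :: real
  assumes "lam > 0"
  shows "lam / (1 + lam) * (a - b)\<^sup>2 \<le> (y - a)\<^sup>2 + lam * (y - b)\<^sup>2"
proof -
  have "(1 + lam) * ((y - a)\<^sup>2 + lam * (y - b)\<^sup>2) - lam * (a - b)\<^sup>2 = ((1 + lam) * y - a - lam * b)\<^sup>2"
    by (simp add: power2_eq_square algebra_simps)
  then have "lam * (a - b)\<^sup>2 \<le> (1 + lam) * ((y - a)\<^sup>2 + lam * (y - b)\<^sup>2)"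
    by (smt (verit) zero_le_power2)
  then show ?thesis
    using assms by (simp add: divide_le_eq mult.commute)
qed

lemma weighted_sq_sum_at_mean:
  fixes lam a b :: real
  assumes "lam > 0"
  defines "m \<equiv> (a + lam * b) / (1 + lam)"
  shows "(m - a)\<^sup>2 + lam * (m - b)\<^sup>2 = lam / (1 + lam) * (a - b)\<^sup>2"
proof -
  have p: "1 + lam \<noteq> 0" using assms by simp
  have "m - a = lam * (b - a) / (1 + lam)" "m - b = (a - b) / (1 + lam)"
    unfolding m_def using p by (simp_all add: field_simps)
  then have "(m - a)\<^sup>2 + lam * (m - b)\<^sup>2 = (lam\<^sup>2 + lam) * (a - b)\<^sup>2 / (1 + lam)\<^sup>2"
    by (simp add: power_divide power_mult_distrib power2_commute[of b a] add_divide_distrib distrib_right)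
  also have "lam\<^sup>2 + lam = lam * (1 + lam)"
    by (simp add: power2_eq_square algebra_simps)
  also have "lam * (1 + lam) * (a - b)\<^sup>2 / (1 + lam)\<^sup>2 = lam / (1 + lam) * (a - b)\<^sup>2"
    using p by (simp add: power2_eq_square)
  finally show ?thesis .
qed

lemma circ_energy_min:
  fixes lam f g x :: real and v :: int
  assumes lam: "lam > 0" and near: "\<bar>g - (f + 2 * pi * v)\<bar> \<le> pi"
  defines "xs \<equiv> wrap2pi ((g + lam * (f + 2 * pi * v)) / (1 + lam))"
  shows "(circ_dist g xs)\<^sup>2 + lam * (circ_dist f xs)\<^sup>2 \<le> (circ_dist g x)\<^sup>2 + lam * (circ_dist f x)\<^sup>2"
proof -
  define f' where "f' = f + 2 * pi * v"
  define m where "m = (g + lam * f') / (1 + lam)"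
  obtain k0 :: int where k0: "xs = m + 2 * pi * k0"
    using wrap2pi_shift[of m] unfolding xs_def m_def f'_def by blast
  have "circ_dist g xs \<le> \<bar>m - g\<bar>"
    using circ_dist_le[of g xs "- k0"] k0 by simp
  then have "(circ_dist g xs)\<^sup>2 \<le> (m - g)\<^sup>2"
    by (simp add: abs_le_square_iff[symmetric] circ_dist_nonneg)
  moreover have "circ_dist f xs \<le> \<bar>m - f'\<bar>"
    using circ_dist_le[of f xs "- k0 - v"] k0 unfolding f'_def by (simp add: algebra_simps)
  then have "(circ_dist f xs)\<^sup>2 \<le> (m - f')\<^sup>2"
    by (simp add: abs_le_square_iff[symmetric] circ_dist_nonneg)
  ultimately have "(circ_dist g xs)\<^sup>2 + lam * (circ_dist f xs)\<^sup>2 \<le> (m - g)\<^sup>2 + lam * (m - f')\<^sup>2"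
    using lam by (simp add: add_mono)
  also have "\<dots> = lam / (1 + lam) * (g - f')\<^sup>2"
    unfolding m_def using weighted_sq_sum_at_mean[OF lam] .
  also have "\<dots> \<le> (circ_dist g x)\<^sup>2 + lam * (circ_dist f x)\<^sup>2"
  proof -
    obtain k l :: int where kl: "circ_dist g x = \<bar>x - g + 2 * pi * k\<bar>"
                                "circ_dist f x = \<bar>x - f + 2 * pi * l\<bar>"
      using circ_dist_attained by metis
    have "\<bar>g - f'\<bar> \<le> \<bar>g - f' + 2 * pi * of_int (l - k + v)\<bar>"
      using near unfolding f'_def by (rule abs_le_abs_add_2pi_multiple)
    also have "g - f' + 2 * pi * of_int (l - k + v) = (g - 2 * pi * k) - (f - 2 * pi * l)"
      unfolding f'_def by (simp add: algebra_simps)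
    finally have "(g - f')\<^sup>2 \<le> ((g - 2 * pi * k) - (f - 2 * pi * l))\<^sup>2"
      by (simp only: abs_le_square_iff)
    then have "lam / (1 + lam) * (g - f')\<^sup>2 \<le> lam / (1 + lam) * ((g - 2 * pi * k) - (f - 2 * pi * l))\<^sup>2"
      using lam by (intro mult_left_mono) auto
    also have "\<dots> \<le> (circ_dist g x)\<^sup>2 + lam * (circ_dist f x)\<^sup>2"
      unfolding kl power2_abs
      using weighted_sq_sum_ge[OF lam, of "g - 2 * pi * k" "f - 2 * pi * l" x]
      by (simp add: algebra_simps)
    finally show ?thesis .
  qed
  finally show ?thesis .
qed

lemma nearest_lift_offset:
  assumes f: "f \<in> {-pi..<pi}" and g: "g \<in> {-pi..<pi}"
  obtains v :: int
  where "(if \<bar>g - f\<bar> \<le> pi then 0 else sgn (g - f)) = real_of_int v"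
    and "\<bar>g - (f + 2 * pi * v)\<bar> \<le> pi"
proof (cases "\<bar>g - f\<bar> \<le> pi")
  case True
  then show ?thesis by (intro that[of 0]) simp_all
next
  case False
  show ?thesis
  proof (cases "g - f > 0")
    case True
    then show ?thesis
      using False f g by (intro that[of 1]) (auto simp: abs_if split: if_splits)
  next
    case False
    then show ?thesis
      using \<open>\<not> \<bar>g - f\<bar> \<le> pi\<close> f g by (intro that[of "-1"]) (auto simp: abs_if sgn_if split: if_splits)
  qed
qed

theorem theorem2:
  fixes N :: nat and lam :: real and f g :: "nat \<Rightarrow> real"
  assumes lam_pos: "lam > 0"
    and f_range: "\<forall>j<N. f j \<in> {-pi..<pi}"
    and g_range: "\<forall>j<N. g j \<in> {-pi..<pi}"
  defines "xs \<equiv> (\<lambda>j. wrap2pi ((g j + lam * f j) / (1 + lam) + lam / (1 + lam) * (2 * pi * (if \<bar>g j - f j\<bar> \<le> pi then 0 else sgn (g j - f j)))))"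
    and "E \<equiv> (\<lambda>x::nat \<Rightarrow> real. \<Sum>j<N. (circ_dist (g j) (x j))\<^sup>2 + lam * (circ_dist (f j) (x j))\<^sup>2)"
  shows "(\<forall>j<N. xs j \<in> {-pi..<pi}) \<and>
         (\<forall>x. (\<forall>j<N. x j \<in> {-pi..<pi}) \<longrightarrow> E xs \<le> E x)"
proof (intro conjI allI impI)
  show "xs j \<in> {-pi..<pi}" for j
    unfolding xs_def by (rule wrap2pi_in_range)
  fix x :: "nat \<Rightarrow> real"
  show "E xs \<le> E x"
    unfolding E_def
  proof (rule sum_mono)
    fix j assume "j \<in> {..<N}"
    then obtain v :: int
      where v: "(if \<bar>g j - f j\<bar> \<le> pi then 0 else sgn (g j - f j)) = real_of_int v"
        and near: "\<bar>g j - (f j + 2 * pi * v)\<bar> \<le> pi"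
      using nearest_lift_offset f_range g_range by blast
    have "xs j = wrap2pi ((g j + lam * (f j + 2 * pi * v)) / (1 + lam))"
      unfolding xs_def v by (simp add: add_divide_distrib distrib_left add.assoc)
    then show "(circ_dist (g j) (xs j))\<^sup>2 + lam * (circ_dist (f j) (xs j))\<^sup>2
             \<le> (circ_dist (g j) (x j))\<^sup>2 + lam * (circ_dist (f j) (x j))\<^sup>2"
      using circ_energy_min[OF lam_pos near] by simp
  qed
qed

end
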